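(* Let $n\in\mathbb{N}$ and let $c_k\in\mathbb{C}$, $0\le k\le\lfloor (n-1)/3\rfloor$. If $$\Pi\sum_{k=0}^{\lfloor (n-1)/3\rfloor}c_k(z+\overline z)^{n-2k}(z^2-z\overline z+\overline z^2)^k=0,$$ then $c_k=0$ for all $k$.
   Context: Let $\omega=e^{2\pi\mathrm{i}/3}$. For a polynomial $f(z,\overline z)$ in $z$ and $\overline z$ (viewed as a function of $z\in\mathbb{C}$), $\Pi f(z,\overline z):=\frac13\big(2f(z,\overline z)-f(\omega^2z,\omega\overline z)-f(\omega z,\omega^2\overline z)\big)$. *)

theory Defs
  imports Complex_Main
begin

definition omega :: complex where
  "omega = cis (2 * pi / 3)"

text \<open>A polynomial f(z, conj z) is represented as a function of two complex arguments
  F z w (w standing for conj z). Pi_op F is again such a two-argument function.\<close>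
definition Pi_op :: "(complex \<Rightarrow> complex \<Rightarrow> complex) \<Rightarrow> complex \<Rightarrow> complex \<Rightarrow> complex" where
  "Pi_op F z w = (2 * F z w - F (omega^2 * z) (omega * w) - F (omega * z) (omega^2 * w)) / 3"

end

theory Submission
  imports Defs "HOL-Analysis.Analysis" "HOL-Computational_Algebra.Polynomial"
begin

text \<open>With \<open>w = cnj z\<close>, \<open>s = z + w\<close> and \<open>q = z\<^sup>2 - z w + w\<^sup>2\<close>, the product \<open>s q = z\<^sup>3 + w\<^sup>3\<close> is
  invariant under \<open>z \<mapsto> \<omega> z\<close>, and \<open>\<Pi> f = 0\<close> forces \<open>f (\<omega> z) = f z\<close>. Write
  \<open>f = c\<^sub>0 s\<^sup>n + s q g\<close>; at \<open>z = \<i>\<close> we have \<open>s = 0\<close> but \<open>s = -\<surd>3\<close> at \<open>\<omega> \<i>\<close>, so \<open>c\<^sub>0 = 0\<close>.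
  Then \<open>s q (g (\<omega> z) - g z) = 0\<close>, and as the zero set of \<open>s q\<close> has empty interior,
  \<open>g\<close> is again \<open>\<omega>\<close>-invariant; induct on \<open>n\<close>.\<close>

lemma omega_eq: "omega = Complex (-1/2) (sqrt 3 / 2)"
  unfolding omega_def by (simp add: cis.ctr cos_120 sin_120)

lemma omega_cube: "omega ^ 3 = 1"
proof -
  have "cis (2 * pi / 3) ^ 3 = cis (real 3 * (2 * pi / 3))" by (rule Complex.DeMoivre)
  then show ?thesis unfolding omega_def by simp
qed

lemma cnj_omega: "cnj omega = omega ^ 2"
  unfolding omega_eq by (simp add: complex_eq_iff power2_eq_square)

lemma cnj_omega_squared: "cnj (omega ^ 2) = omega"
proof -
  have "cnj (omega ^ 2) = omega ^ 3 * omega"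
    by (simp add: cnj_omega power2_eq_square power3_eq_cube)
  then show ?thesis by (simp add: omega_cube)
qed

lemma Pi_op_conj_pair:
  "Pi_op F z (cnj z) =
     (2 * F z (cnj z) - F (omega^2 * z) (cnj (omega^2 * z)) - F (omega * z) (cnj (omega * z))) / 3"
  unfolding Pi_op_def complex_cnj_mult cnj_omega cnj_omega_squared ..

lemma rotation_invariant_if_balanced:
  fixes f :: "complex \<Rightarrow> complex" and r :: complex
  assumes r3: "r ^ 3 = 1" and balanced: "\<And>z. 2 * f z = f (r^2 * z) + f (r * z)"
  shows "f (r * z) = f z"
proof -
  have "2 * f (r * z) = f (r^2 * (r * z)) + f (r * (r * z))" by (rule balanced)
  also have "r^2 * (r * z) = z"
    using r3 by (simp add: power2_eq_square power3_eq_cube mult.assoc[symmetric])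
  also have "r * (r * z) = r^2 * z" by (simp add: power2_eq_square)
  finally have rotated: "2 * f (r * z) = f z + f (r^2 * z)" .
  have "3 * f (r * z) = f (r * z) + (f z + f (r^2 * z))" using rotated by simp
  also have "\<dots> = 3 * f z" using balanced[of z] by simp
  finally show ?thesis by simp
qed

definition sq_poly :: "nat \<Rightarrow> (nat \<Rightarrow> complex) \<Rightarrow> complex \<Rightarrow> complex" where
  "sq_poly n c z = (\<Sum>k<(n + 2) div 3. c k * (z + cnj z) ^ (n - 2 * k) * (z^2 - z * cnj z + cnj z^2) ^ k)"

lemma sq_poly_continuous: "continuous_on UNIV (sq_poly n c)"
  unfolding sq_poly_def by (intro continuous_intros)

lemma terms_count_reduce: "n \<ge> 1 \<Longrightarrow> (n + 2) div 3 = Suc ((n - 3 + 2) div 3)"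
  by presburger

lemma sq_poly_reduce:
  assumes "n \<ge> 1"
  shows "sq_poly n c z = c 0 * (z + cnj z) ^ n + (z^3 + cnj z^3) * sq_poly (n - 3) (\<lambda>k. c (Suc k)) z"
proof -
  let ?s = "z + cnj z" and ?q = "z^2 - z * cnj z + cnj z^2"
  have sq: "z^3 + cnj z^3 = ?s * ?q"
    by (simp add: algebra_simps power2_eq_square power3_eq_cube)
  have "(\<Sum>k<(n - 3 + 2) div 3. c (Suc k) * ?s ^ (n - 2 * Suc k) * ?q ^ Suc k)
      = (z^3 + cnj z^3) * sq_poly (n - 3) (\<lambda>k. c (Suc k)) z"
    unfolding sq_poly_def sum_distrib_left
  proof (rule sum.cong)
    fix k assume "k \<in> {..<(n - 3 + 2) div 3}"
    then have "n - 2 * Suc k = Suc (n - 3 - 2 * k)" by auto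
    then show "c (Suc k) * ?s ^ (n - 2 * Suc k) * ?q ^ Suc k =
        (z^3 + cnj z^3) * (c (Suc k) * ?s ^ (n - 3 - 2 * k) * ?q ^ k)"
      unfolding sq by (simp add: algebra_simps)
  qed simp
  then show ?thesis
    unfolding sq_poly_def terms_count_reduce[OF assms] sum.lessThan_Suc_shift by simp
qed

lemma sum_cubes_conj_nonzero_near:
  fixes z :: complex
  shows "eventually (\<lambda>t::real. (z + of_real t)^3 + cnj (z + of_real t)^3 \<noteq> 0) (at 0)"
proof -
  define p where "p = [: z^3 + cnj z^3, 3 * (z^2 + cnj z^2), 3 * (z + cnj z), 2 :]"
  have p_eval: "poly p (of_real t) = (z + of_real t)^3 + cnj (z + of_real t)^3" for t
    unfolding p_def by (simp add: algebra_simps power2_eq_square power3_eq_cube)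
  have "p \<noteq> 0" unfolding p_def by simp
  then have "finite {x. poly p x = 0}" by (rule poly_roots_finite)
  then have "finite (of_real -` {x. poly p x = 0} :: real set)"
    by (rule finite_vimageI) (simp add: inj_def)
  then have "finite {t::real. poly p (of_real t) = 0}" by (simp add: vimage_def)
  then have "eventually (\<lambda>t. t \<notin> {t::real. poly p (of_real t) = 0}) (at 0)"
    using islimpt_finite islimpt_iff_eventually by blast
  then show ?thesis by (simp add: p_eval)
qed

lemma vanishes_if_vanishes_off_sum_cubes_zeros:
  fixes h :: "complex \<Rightarrow> 'a::real_normed_vector"
  assumes cont: "continuous_on UNIV h" and vanish: "\<And>z. z^3 + cnj z^3 \<noteq> 0 \<Longrightarrow> h z = 0"
  shows "h z = 0"
proof -
  define g where "g t = h (z + of_real t)" for t :: real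
  have "isCont g 0"
    unfolding g_def
    by (rule continuous_on_interior[of UNIV], intro continuous_intros continuous_on_compose2[OF cont]) auto
  then have "(g \<longlongrightarrow> g 0) (at 0)" by (simp add: isCont_def)
  moreover have "eventually (\<lambda>t. g t = 0) (at 0)"
    using sum_cubes_conj_nonzero_near[of z] by eventually_elim (simp add: g_def vanish)
  then have "(g \<longlongrightarrow> 0) (at 0)" by (rule tendsto_eventually)
  ultimately have "g 0 = 0" using tendsto_unique trivial_limit_at by blast
  then show ?thesis by (simp add: g_def)
qed

lemma sum_cubes_conj_rotate: "(omega * z)^3 + cnj (omega * z)^3 = z^3 + cnj z^3"
proof -
  have "cnj omega ^ 3 = 1" by (metis complex_cnj_one complex_cnj_power omega_cube)
  then show ?thesis by (simp add: power_mult_distrib omega_cube)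
qed

lemma real_part_twice_omega_i: "omega * \<i> + cnj (omega * \<i>) = - of_real (sqrt 3)"
  unfolding omega_eq by (simp add: complex_eq_iff)

lemma sq_poly_rotation_invariant_imp_zero:
  assumes "\<And>z. sq_poly n c (omega * z) = sq_poly n c z" and "k < (n + 2) div 3"
  shows "c k = 0"
  using assms
proof (induction n arbitrary: c k rule: less_induct)
  case (less n)
  then have n1: "n \<ge> 1" by (cases n) auto
  define g where "g = sq_poly (n - 3) (\<lambda>k. c (Suc k))"
  have diff: "c 0 * ((omega * z + cnj (omega * z))^n - (z + cnj z)^n)
      + (z^3 + cnj z^3) * (g (omega * z) - g z) = 0" for z
    using less.prems(1)[of z] unfolding sq_poly_reduce[OF n1] g_def sum_cubes_conj_rotate
    by (simp add: algebra_simps)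
  have "\<i> + cnj \<i> = 0" by simp
  with diff[of \<i>] n1 have "c 0 * (- of_real (sqrt 3))^n = 0"
    unfolding real_part_twice_omega_i by (simp add: power_0_left)
  then have c0: "c 0 = 0" by simp
  have "g (omega * z) - g z = 0" for z
  proof (rule vanishes_if_vanishes_off_sum_cubes_zeros[where h = "\<lambda>z. g (omega * z) - g z"])
    show "continuous_on UNIV (\<lambda>z. g (omega * z) - g z)"
      unfolding g_def by (intro continuous_intros continuous_on_compose2[OF sq_poly_continuous]) auto
  qed (use diff c0 in force)
  then have "c (Suc j) = 0" if "j < (n - 3 + 2) div 3" for j
    using less.IH[of "n - 3" "\<lambda>k. c (Suc k)" j] n1 that unfolding g_def by simp
  with c0 less.prems(2) show ?case
    unfolding terms_count_reduce[OF n1] by (cases k) auto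
qed

theorem proposition21:
  fixes n :: nat and c :: "nat \<Rightarrow> complex"
  assumes "\<forall>z::complex. Pi_op (\<lambda>z w. \<Sum>k<(n + 2) div 3.
              c k * (z + w) ^ (n - 2 * k) * (z^2 - z * w + w^2) ^ k) z (cnj z) = 0"
  shows "\<forall>k<(n + 2) div 3. c k = 0"
proof -
  have "(2 * sq_poly n c z - sq_poly n c (omega^2 * z) - sq_poly n c (omega * z)) / 3 = 0" for z
    using assms[rule_format, of z] unfolding Pi_op_conj_pair sq_poly_def .
  then have "2 * sq_poly n c z = sq_poly n c (omega^2 * z) + sq_poly n c (omega * z)" for z
    by (simp add: algebra_simps)
  then have "sq_poly n c (omega * z) = sq_poly n c z" for z
    using rotation_invariant_if_balanced[OF omega_cube] by blast
  then show ?thesis using sq_poly_rotation_invariant_imp_zero by blast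
qed

end
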